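(* Let $(R,\sigma_t)$ be a $\lambda$-ring and let $(P_\alpha)_{\alpha\in A}$ be a (possibly infinite) family of polynomials in $R_{sp}[T]$. Then there is a $\lambda$-ring homomorphism $(R,\sigma_t)\to(R',\sigma'_t)$ together with a family $(x_\alpha)_{\alpha\in A}$ of elements of $R'$ such that (i) $x_\alpha\in R'_{sp}$ for all $\alpha$ and (ii) $P_\alpha(x_\alpha)=0$ in $R'$ for all $\alpha$, which is universal with these properties: for every $\lambda$-ring homomorphism $R\to R''$ and family $(y_\alpha)$ in $R''_{sp}$ with $P_\alpha(y_\alpha)=0$ (coefficients mapped to $R''$), there is a unique $\lambda$-ring homomorphism $R'\to R''$ under $R$ mapping $x_\alpha$ to $y_\alpha$. In particular $(R',(x_\alpha))$ is unique up to isomorphism; it is denoted $R\langle x_\alpha\mid\alpha\in A\rangle$.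
   Context: A $\lambda$-ring is a commutative ring $R$ with unit and a map $\sigma_t:R\to1+tR[[t]]$, $\sigma_t(a)=\sum_{n\ge0}\sigma^n(a)t^n$, with $\sigma_t(0)=1$, $\sigma_t(a+b)=\sigma_t(a)\sigma_t(b)$ and $\sigma_t(a)\equiv1+at\pmod{t^2}$; homomorphisms are ring homomorphisms commuting with $\sigma_t$. Polynomials $P^{m,n}$: with variables $y_1,\dots,y_m$, $x_1,\dots,x_{mn}$ and $h_d$ the $d$-th complete homogeneous symmetric polynomial, $P^{m,n}$ is the polynomial with $h_m(\{y_i\bar x^{\bar n}\})=P^{m,n}(h_1(\bar y),\dots,h_m(\bar y),h_1(\bar x),\dots,h_{mn}(\bar x))$, where $h_m$ is evaluated on the family of all products $y_i\bar x^{\bar n}$ with $\bar x^{\bar n}$ ranging over monomials of total degree $n$ in $x_1,\dots,x_{mn}$. For a $\lambda$-ring $R$: $R_{sp}:=\{a\in R\mid \sigma^m(b\sigma^n(a))=P^{m,n}(\sigma^1(b),\dots,\sigma^m(b),\sigma^1(a),\dots,\sigma^{mn}(a))\ \forall b\in R,\ m,n\in\mathbb{N}\}$. *)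

theory Defs
  imports "HOL-Algebra.Polynomials" "HOL-Library.Multiset"
begin

definition hsym :: "nat \<Rightarrow> 'i set \<Rightarrow> ('i \<Rightarrow> 'r::comm_ring_1) \<Rightarrow> 'r" where
  "hsym d I z = (\<Sum>M\<in>{M. set_mset M \<subseteq> I \<and> size M = d}. \<Prod>i\<in>#M. z i)"

text \<open>Integer multivariate polynomials: coefficient functions on monomials
  (a monomial is a multiset of variable indices), with finite support.\<close>
definition ipoly_eval :: "(nat multiset \<Rightarrow> int) \<Rightarrow> (nat \<Rightarrow> 'r::comm_ring_1) \<Rightarrow> 'r" where
  "ipoly_eval p v = (\<Sum>M\<in>{M. p M \<noteq> 0}. of_int (p M) * (\<Prod>i\<in>#M. v i))"

text \<open>The polynomial P^{m,n}: variables 0..m-1 stand for h_1(y),...,h_m(y),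
  variables m..m+mn-1 stand for h_1(x),...,h_{mn}(x). The identity is required
  as an identity of integer polynomials (equivalently, at all integer points).\<close>
definition Pmn :: "nat \<Rightarrow> nat \<Rightarrow> (nat multiset \<Rightarrow> int)" where
  "Pmn m n = (THE p. finite {M. p M \<noteq> 0}
     \<and> (\<forall>M. p M \<noteq> 0 \<longrightarrow> set_mset M \<subseteq> {..<m + m*n})
     \<and> (\<forall>(y::nat \<Rightarrow> int) (x::nat \<Rightarrow> int).
          hsym m ({..<m} \<times> {N. set_mset N \<subseteq> {..<m*n} \<and> size N = n})
                 (\<lambda>(i,N). y i * (\<Prod>j\<in>#N. x j))
          = ipoly_eval p (\<lambda>k. if k < m then hsym (k+1) {..<m} y
                               else hsym (k - m + 1) {..<m*n} x)))"

definition ipoly_eval_R :: "('a,'m) ring_scheme \<Rightarrow> (nat multiset \<Rightarrow> int) \<Rightarrow> (nat \<Rightarrow> 'a) \<Rightarrow> 'a" where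
  "ipoly_eval_R R p v = (\<Oplus>\<^bsub>R\<^esub> M\<in>{M. p M \<noteq> 0}.
      ([p M] \<cdot>\<^bsub>R\<^esub> \<one>\<^bsub>R\<^esub>) \<otimes>\<^bsub>R\<^esub> (\<Otimes>\<^bsub>R\<^esub> i\<in>set_mset M. v i [^]\<^bsub>R\<^esub> count M i))"

text \<open>Lambda-ring: sigma n a is the n-th coefficient of sigma_t(a).\<close>
definition lambda_ring :: "('a,'m) ring_scheme \<Rightarrow> (nat \<Rightarrow> 'a \<Rightarrow> 'a) \<Rightarrow> bool" where
  "lambda_ring R \<sigma> \<longleftrightarrow> cring R
     \<and> (\<forall>n. \<forall>a\<in>carrier R. \<sigma> n a \<in> carrier R)
     \<and> (\<forall>a\<in>carrier R. \<sigma> 0 a = \<one>\<^bsub>R\<^esub> \<and> \<sigma> 1 a = a)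
     \<and> (\<forall>n>0. \<sigma> n \<zero>\<^bsub>R\<^esub> = \<zero>\<^bsub>R\<^esub>)
     \<and> (\<forall>n. \<forall>a\<in>carrier R. \<forall>b\<in>carrier R.
          \<sigma> n (a \<oplus>\<^bsub>R\<^esub> b) = (\<Oplus>\<^bsub>R\<^esub> i\<in>{..n}. \<sigma> i a \<otimes>\<^bsub>R\<^esub> \<sigma> (n - i) b))"

definition lambda_hom :: "('a,'m) ring_scheme \<Rightarrow> (nat \<Rightarrow> 'a \<Rightarrow> 'a) \<Rightarrow>
    ('b,'n) ring_scheme \<Rightarrow> (nat \<Rightarrow> 'b \<Rightarrow> 'b) \<Rightarrow> ('a \<Rightarrow> 'b) \<Rightarrow> bool" where
  "lambda_hom R \<sigma> S \<tau> f \<longleftrightarrow> f \<in> ring_hom R S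
     \<and> (\<forall>n. \<forall>a\<in>carrier R. f (\<sigma> n a) = \<tau> n (f a))"

definition lambda_sp :: "('a,'m) ring_scheme \<Rightarrow> (nat \<Rightarrow> 'a \<Rightarrow> 'a) \<Rightarrow> 'a set" where
  "lambda_sp R \<sigma> = {a\<in>carrier R. \<forall>b\<in>carrier R. \<forall>m n.
      \<sigma> m (b \<otimes>\<^bsub>R\<^esub> \<sigma> n a)
      = ipoly_eval_R R (Pmn m n) (\<lambda>k. if k < m then \<sigma> (k+1) b else \<sigma> (k - m + 1) a)}"

definition adjoins :: "'a ring \<Rightarrow> (nat \<Rightarrow> 'a \<Rightarrow> 'a) \<Rightarrow> 'b set \<Rightarrow> ('b \<Rightarrow> 'a list) \<Rightarrow>
    'c ring \<Rightarrow> (nat \<Rightarrow> 'c \<Rightarrow> 'c) \<Rightarrow> ('a \<Rightarrow> 'c) \<Rightarrow> ('b \<Rightarrow> 'c) \<Rightarrow> bool" where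
  "adjoins R \<sigma> A P S \<tau> g y \<longleftrightarrow> lambda_ring S \<tau> \<and> lambda_hom R \<sigma> S \<tau> g
     \<and> (\<forall>\<alpha>\<in>A. y \<alpha> \<in> lambda_sp S \<tau> \<and> ring.eval S (map g (P \<alpha>)) (y \<alpha>) = \<zero>\<^bsub>S\<^esub>)"

definition factors_uniquely :: "'a ring \<Rightarrow> 'b set \<Rightarrow>
    'd ring \<Rightarrow> (nat \<Rightarrow> 'd \<Rightarrow> 'd) \<Rightarrow> ('a \<Rightarrow> 'd) \<Rightarrow> ('b \<Rightarrow> 'd) \<Rightarrow>
    'c ring \<Rightarrow> (nat \<Rightarrow> 'c \<Rightarrow> 'c) \<Rightarrow> ('a \<Rightarrow> 'c) \<Rightarrow> ('b \<Rightarrow> 'c) \<Rightarrow> bool" where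
  "factors_uniquely R A R' \<sigma>' f x S \<tau> g y \<longleftrightarrow>
    (\<exists>h. lambda_hom R' \<sigma>' S \<tau> h \<and> (\<forall>r\<in>carrier R. h (f r) = g r) \<and> (\<forall>\<alpha>\<in>A. h (x \<alpha>) = y \<alpha>)
      \<and> (\<forall>h'. lambda_hom R' \<sigma>' S \<tau> h' \<and> (\<forall>r\<in>carrier R. h' (f r) = g r)
               \<and> (\<forall>\<alpha>\<in>A. h' (x \<alpha>) = y \<alpha>) \<longrightarrow> (\<forall>z\<in>carrier R'. h' z = h z)))"

end

theory Submission
  imports Defs
begin

(*
  The adjunction is a term model. Terms are built from the elements of R, indeterminates
  x_\<alpha>, 0, 1, +, -, \<times> and the operations \<sigma>^n; two terms are identified when they agree in
  every \<lambda>-ring under R in which the x_\<alpha> are special roots of the P_\<alpha>. The quotient maps jointly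
  injectively to all these models, and every defining condition (ring and \<lambda>-ring axioms,
  homomorphism, specialness, P_\<alpha>(x_\<alpha>) = 0) is an identity, hence reflected along a jointly
  injective family of homomorphisms; so the quotient is itself such a model. It is initial since
  a homomorphism out of it is determined by its values on R and the x_\<alpha>, and evaluation of terms
  provides one.

  HOL cannot quantify over all types, so only models carried by the type of the quotient,
  ('a + 'b) list, are used. This loses nothing: terms inject into ('a + 'b) list, hence so does
  the sub-\<lambda>-ring generated by R and the y_\<alpha> in any model, and that copy is again a model.
*)

lemma (in ring_hom_ring) hom_add_pow_int:
  "x \<in> carrier R \<Longrightarrow> h ([(k::int)] \<cdot>\<^bsub>R\<^esub> x) = [k] \<cdot>\<^bsub>S\<^esub> h x"
  unfolding add_pow_def using a_group_hom by (simp add: group_hom.hom_int_pow)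

datatype ('a, 'b) lterm =
    TConst 'a | TVar 'b | TZero | TOne
  | TAdd "('a, 'b) lterm" "('a, 'b) lterm" | TNeg "('a, 'b) lterm"
  | TMul "('a, 'b) lterm" "('a, 'b) lterm" | TSigma nat "('a, 'b) lterm"

definition tag :: "nat \<Rightarrow> ('a + 'b) list" where
  "tag k = replicate k (Inl undefined) @ [Inr undefined]"

lemma tag_append_eq_iff: "tag k @ xs = tag l @ ys \<longleftrightarrow> k = l \<and> xs = ys"
proof
  show "tag k @ xs = tag l @ ys \<Longrightarrow> k = l \<and> xs = ys"
    by (induction k arbitrary: l; case_tac l) (auto simp: tag_def)
qed simp

lemma tag_eq_iffs:
  "tag k = tag l @ ys \<longleftrightarrow> k = l \<and> ys = []"
  "tag k @ xs = tag l \<longleftrightarrow> k = l \<and> xs = []"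
  "tag k = tag l \<longleftrightarrow> k = l"
  using tag_append_eq_iff[of k _ l] by (metis append_Nil2)+

fun encode :: "('a, 'b) lterm \<Rightarrow> ('a + 'b) list" where
  "encode (TConst a) = tag 0 @ [Inl a]"
| "encode (TVar b) = tag 1 @ [Inr b]"
| "encode TZero = tag 2"
| "encode TOne = tag 3"
| "encode (TAdd t u) = tag 4 @ encode t @ encode u"
| "encode (TNeg t) = tag 5 @ encode t"
| "encode (TMul t u) = tag 6 @ encode t @ encode u"
| "encode (TSigma n t) = tag 7 @ tag n @ encode t"

lemma encode_append_eq: "encode t @ xs = encode u @ ys \<Longrightarrow> t = u \<and> xs = ys"
proof (induction t arbitrary: u xs ys)
  case (TAdd t1 t2)
  show ?case
  proof (cases u)
    case (TAdd u1 u2)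
    with TAdd.prems have "encode t1 @ encode t2 @ xs = encode u1 @ encode u2 @ ys"
      by (simp add: tag_append_eq_iff)
    with TAdd.IH show ?thesis using \<open>u = _\<close> by blast
  qed (use TAdd.prems in \<open>simp_all add: tag_append_eq_iff tag_eq_iffs\<close>)
next
  case (TMul t1 t2)
  show ?case
  proof (cases u)
    case (TMul u1 u2)
    with TMul.prems have "encode t1 @ encode t2 @ xs = encode u1 @ encode u2 @ ys"
      by (simp add: tag_append_eq_iff)
    with TMul.IH show ?thesis using \<open>u = _\<close> by blast
  qed (use TMul.prems in \<open>simp_all add: tag_append_eq_iff tag_eq_iffs\<close>)
qed (case_tac u; auto simp: tag_append_eq_iff tag_eq_iffs)+

lemma inj_encode: "inj encode"
  by (rule injI) (use encode_append_eq[of _ "[]" _ "[]"] in auto)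

lemma (in cring) ipoly_eval_R_closed:
  "(\<And>k. v k \<in> carrier R) \<Longrightarrow> ipoly_eval_R R p v \<in> carrier R"
  unfolding ipoly_eval_R_def by (auto intro!: finsum_closed finprod_closed)

lemma (in ring_hom_cring) ipoly_eval_R_hom:
  assumes "\<And>k. v k \<in> carrier R"
  shows "h (ipoly_eval_R R p v) = ipoly_eval_R S p (h \<circ> v)"
proof -
  have monomial: "h (\<Otimes>\<^bsub>R\<^esub> i\<in>set_mset M. v i [^]\<^bsub>R\<^esub> count M i)
      = (\<Otimes>\<^bsub>S\<^esub> i\<in>set_mset M. h (v i) [^]\<^bsub>S\<^esub> count M i)" for M
    using assms by (subst hom_finprod) (auto intro!: S.finprod_cong' ring.hom_nat_pow)
  have one: "h ([k] \<cdot>\<^bsub>R\<^esub> \<one>\<^bsub>R\<^esub>) = [k] \<cdot>\<^bsub>S\<^esub> \<one>\<^bsub>S\<^esub>" for k :: int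
    by (simp add: ring.hom_add_pow_int)
  show ?thesis
    unfolding ipoly_eval_R_def using assms
    by (subst hom_finsum) (auto simp: monomial one intro!: S.finsum_cong' R.finprod_closed)
qed

locale lambda_subdirect =
  fixes Q :: "'q ring" and \<sigma> :: "nat \<Rightarrow> 'q \<Rightarrow> 'q" and neg :: "'q \<Rightarrow> 'q"
    and I :: "'i set" and M :: "'i \<Rightarrow> 'm ring" and \<tau> :: "'i \<Rightarrow> nat \<Rightarrow> 'm \<Rightarrow> 'm"
    and h :: "'i \<Rightarrow> 'q \<Rightarrow> 'm"
  assumes lambda_ring_M: "i \<in> I \<Longrightarrow> lambda_ring (M i) (\<tau> i)"
    and zero_closed: "\<zero>\<^bsub>Q\<^esub> \<in> carrier Q"
    and one_closed: "\<one>\<^bsub>Q\<^esub> \<in> carrier Q"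
    and add_closed: "U \<in> carrier Q \<Longrightarrow> V \<in> carrier Q \<Longrightarrow> U \<oplus>\<^bsub>Q\<^esub> V \<in> carrier Q"
    and mult_closed: "U \<in> carrier Q \<Longrightarrow> V \<in> carrier Q \<Longrightarrow> U \<otimes>\<^bsub>Q\<^esub> V \<in> carrier Q"
    and neg_closed: "U \<in> carrier Q \<Longrightarrow> neg U \<in> carrier Q"
    and sigma_closed: "U \<in> carrier Q \<Longrightarrow> \<sigma> n U \<in> carrier Q"
    and h_closed: "i \<in> I \<Longrightarrow> U \<in> carrier Q \<Longrightarrow> h i U \<in> carrier (M i)"
    and h_add: "i \<in> I \<Longrightarrow> U \<in> carrier Q \<Longrightarrow> V \<in> carrier Q \<Longrightarrow>
      h i (U \<oplus>\<^bsub>Q\<^esub> V) = h i U \<oplus>\<^bsub>M i\<^esub> h i V"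
    and h_mult: "i \<in> I \<Longrightarrow> U \<in> carrier Q \<Longrightarrow> V \<in> carrier Q \<Longrightarrow>
      h i (U \<otimes>\<^bsub>Q\<^esub> V) = h i U \<otimes>\<^bsub>M i\<^esub> h i V"
    and h_zero: "i \<in> I \<Longrightarrow> h i \<zero>\<^bsub>Q\<^esub> = \<zero>\<^bsub>M i\<^esub>"
    and h_one: "i \<in> I \<Longrightarrow> h i \<one>\<^bsub>Q\<^esub> = \<one>\<^bsub>M i\<^esub>"
    and h_neg: "i \<in> I \<Longrightarrow> U \<in> carrier Q \<Longrightarrow> h i (neg U) = \<ominus>\<^bsub>M i\<^esub> h i U"
    and h_sigma: "i \<in> I \<Longrightarrow> U \<in> carrier Q \<Longrightarrow> h i (\<sigma> n U) = \<tau> i n (h i U)"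
    and jointly_injective:
      "U \<in> carrier Q \<Longrightarrow> V \<in> carrier Q \<Longrightarrow> (\<And>i. i \<in> I \<Longrightarrow> h i U = h i V) \<Longrightarrow> U = V"
begin

lemma cring_M: "i \<in> I \<Longrightarrow> cring (M i)"
  using lambda_ring_M by (simp add: lambda_ring_def)

lemmas closed = zero_closed one_closed add_closed mult_closed neg_closed sigma_closed
lemmas h_simps = h_add h_mult h_zero h_one h_neg h_sigma h_closed closed
lemmas transfer_simps = h_simps cring.cring_simprules[OF cring_M]

(* Each ring axiom of Q is checked after applying every h i, where it holds in M i. *)

lemma neg_add_cancel: "U \<in> carrier Q \<Longrightarrow> neg U \<oplus>\<^bsub>Q\<^esub> U = \<zero>\<^bsub>Q\<^esub>"
  by (rule jointly_injective) (simp_all add: transfer_simps)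

lemma cring_Q: "cring Q"
proof (rule cringI)
  show "abelian_group Q"
    by (rule abelian_groupI; (rule closed; assumption)?)
       (auto intro: neg_add_cancel neg_closed jointly_injective simp: transfer_simps)
  show "comm_monoid Q"
    by (rule comm_monoidI; (rule closed; assumption)?; rule jointly_injective)
       (simp_all add: transfer_simps)
qed (rule jointly_injective; simp add: transfer_simps)

lemma ring_hom_cring_h: "i \<in> I \<Longrightarrow> ring_hom_cring Q (M i) (h i)"
  by (rule ring_hom_cringI[OF cring_Q cring_M]) (auto intro!: ring_hom_memI simp: h_simps)

lemma a_inv_eq_neg:
  assumes "U \<in> carrier Q"
  shows "\<ominus>\<^bsub>Q\<^esub> U = neg U"
proof -
  interpret Q: cring Q by (rule cring_Q)
  show ?thesis using assms by (simp add: Q.minus_equality neg_add_cancel neg_closed)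
qed

lemma h_finsum:
  assumes "i \<in> I" and "finite K" and "\<And>k. k \<in> K \<Longrightarrow> F k \<in> carrier Q"
  shows "h i (\<Oplus>\<^bsub>Q\<^esub> k\<in>K. F k) = (\<Oplus>\<^bsub>M i\<^esub> k\<in>K. h i (F k))"
proof -
  interpret ring_hom_cring Q "M i" "h i" by (rule ring_hom_cring_h[OF assms(1)])
  show ?thesis using assms by (subst hom_finsum) (auto intro!: S.finsum_cong' simp: h_closed)
qed

lemma lambda_ring_Q: "lambda_ring Q \<sigma>"
  unfolding lambda_ring_def
proof (intro conjI ballI allI impI)
  interpret Q: cring Q by (rule cring_Q)
  have M_axioms: "\<tau> i 0 c = \<one>\<^bsub>M i\<^esub>" "\<tau> i 1 c = c" if "i \<in> I" "c \<in> carrier (M i)" for i c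
    using lambda_ring_M[OF that(1)] that(2) by (simp_all add: lambda_ring_def)
  have M_zero: "\<tau> i n \<zero>\<^bsub>M i\<^esub> = \<zero>\<^bsub>M i\<^esub>" if "i \<in> I" "n > 0" for i n
    using lambda_ring_M[OF that(1)] that(2) by (simp add: lambda_ring_def)
  show "cring Q" by (rule cring_Q)
  show "\<sigma> n a \<in> carrier Q" if "a \<in> carrier Q" for n a using that by (rule sigma_closed)
  show "\<sigma> 0 a = \<one>\<^bsub>Q\<^esub>" "\<sigma> 1 a = a" if "a \<in> carrier Q" for a
    by (rule jointly_injective; use that M_axioms in \<open>simp add: h_simps\<close>)+
  show "\<sigma> n \<zero>\<^bsub>Q\<^esub> = \<zero>\<^bsub>Q\<^esub>" if "n > 0" for n
    by (rule jointly_injective) (use that M_zero in \<open>simp_all add: h_simps\<close>)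
  show "\<sigma> n (a \<oplus>\<^bsub>Q\<^esub> b) = (\<Oplus>\<^bsub>Q\<^esub> k\<in>{..n}. \<sigma> k a \<otimes>\<^bsub>Q\<^esub> \<sigma> (n - k) b)"
    if "a \<in> carrier Q" "b \<in> carrier Q" for n a b
  proof (rule jointly_injective)
    fix i assume i: "i \<in> I"
    with that show "h i (\<sigma> n (a \<oplus>\<^bsub>Q\<^esub> b)) = h i (\<Oplus>\<^bsub>Q\<^esub> k\<in>{..n}. \<sigma> k a \<otimes>\<^bsub>Q\<^esub> \<sigma> (n - k) b)"
      using lambda_ring_M[OF i] by (simp add: h_finsum h_simps lambda_ring_def)
  qed (use that in \<open>auto simp: closed\<close>)
qed


lemma lambda_hom_reflect:
  assumes R: "lambda_ring R \<rho>"
    and f_closed: "\<And>r. r \<in> carrier R \<Longrightarrow> f r \<in> carrier Q"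
    and g: "\<And>i. i \<in> I \<Longrightarrow> lambda_hom R \<rho> (M i) (\<tau> i) (g i)"
    and hf: "\<And>i r. i \<in> I \<Longrightarrow> r \<in> carrier R \<Longrightarrow> h i (f r) = g i r"
  shows "lambda_hom R \<rho> Q \<sigma> f"
  unfolding lambda_hom_def
proof (intro conjI ballI allI)
  interpret R: cring R using R by (simp add: lambda_ring_def)
  have g_ring_hom: "i \<in> I \<Longrightarrow> g i \<in> ring_hom R (M i)" for i
    using g by (simp add: lambda_hom_def)
  show "f \<in> ring_hom R Q"
    by (rule ring_hom_memI; (rule f_closed; assumption)?; rule jointly_injective)
       (simp_all add: f_closed h_simps hf g_ring_hom ring_hom_mult ring_hom_add ring_hom_one)
  show "f (\<rho> n r) = \<sigma> n (f r)" if "r \<in> carrier R" for n r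
  proof (rule jointly_injective)
    have "\<rho> n r \<in> carrier R" using R that by (simp add: lambda_ring_def)
    then show "h i (f (\<rho> n r)) = h i (\<sigma> n (f r))" if "i \<in> I" for i
      using g[OF \<open>i \<in> I\<close>] \<open>r \<in> carrier R\<close> that by (simp add: h_simps f_closed hf lambda_hom_def)
  qed (use that R in \<open>auto simp: f_closed sigma_closed lambda_ring_def\<close>)
qed

lemma lambda_sp_reflect:
  assumes x: "x \<in> carrier Q" and sp: "\<And>i. i \<in> I \<Longrightarrow> h i x \<in> lambda_sp (M i) (\<tau> i)"
  shows "x \<in> lambda_sp Q \<sigma>"
  unfolding lambda_sp_def
proof (intro CollectI conjI ballI allI)
  fix b m n assume b: "b \<in> carrier Q"
  let ?v = "\<lambda>k. if k < m then \<sigma> (k + 1) b else \<sigma> (k - m + 1) x"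
  have v_closed: "?v k \<in> carrier Q" for k using b x by (simp add: sigma_closed)
  show "\<sigma> m (b \<otimes>\<^bsub>Q\<^esub> \<sigma> n x) = ipoly_eval_R Q (Pmn m n) ?v"
  proof (rule jointly_injective)
    fix i assume i: "i \<in> I"
    have "h i (ipoly_eval_R Q (Pmn m n) ?v) = ipoly_eval_R (M i) (Pmn m n) (h i \<circ> ?v)"
      by (rule ring_hom_cring.ipoly_eval_R_hom[OF ring_hom_cring_h[OF i] v_closed])
    also have "h i \<circ> ?v = (\<lambda>k. if k < m then \<tau> i (k + 1) (h i b) else \<tau> i (k - m + 1) (h i x))"
      using b x i by (auto simp: h_simps)
    also have "ipoly_eval_R (M i) (Pmn m n) \<dots> = \<tau> i m (h i b \<otimes>\<^bsub>M i\<^esub> \<tau> i n (h i x))"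
      using sp[OF i] h_closed[OF i b] unfolding lambda_sp_def by auto
    finally show "h i (\<sigma> m (b \<otimes>\<^bsub>Q\<^esub> \<sigma> n x)) = h i (ipoly_eval_R Q (Pmn m n) ?v)"
      using b x i by (simp add: h_simps)
  qed (use b x v_closed in \<open>simp_all add: closed cring.ipoly_eval_R_closed[OF cring_Q]\<close>)
qed (rule x)

lemma eval_eq_zero_reflect:
  assumes p: "set p \<subseteq> carrier Q" and x: "x \<in> carrier Q"
    and root: "\<And>i. i \<in> I \<Longrightarrow> ring.eval (M i) (map (h i) p) (h i x) = \<zero>\<^bsub>M i\<^esub>"
  shows "ring.eval Q p x = \<zero>\<^bsub>Q\<^esub>"
proof (rule jointly_injective)
  fix i assume i: "i \<in> I"
  interpret ring_hom_cring Q "M i" "h i" by (rule ring_hom_cring_h[OF i])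
  show "h i (ring.eval Q p x) = h i \<zero>\<^bsub>Q\<^esub>"
    using ring.eval_hom'[OF x p] root[OF i] by (simp add: h_zero[OF i])
qed (use p x in \<open>simp_all add: closed ring.eval_in_carrier[OF cring.axioms(1)[OF cring_Q]]\<close>)

lemma adjoins_reflect:
  assumes R: "lambda_ring R \<rho>" and P: "\<And>\<alpha>. \<alpha> \<in> A \<Longrightarrow> set (P \<alpha>) \<subseteq> carrier R"
    and M: "\<And>i. i \<in> I \<Longrightarrow> adjoins R \<rho> A P (M i) (\<tau> i) (g i) (y i)"
    and f_closed: "\<And>r. r \<in> carrier R \<Longrightarrow> f r \<in> carrier Q"
    and x_closed: "\<And>\<alpha>. \<alpha> \<in> A \<Longrightarrow> x \<alpha> \<in> carrier Q"
    and hf: "\<And>i r. i \<in> I \<Longrightarrow> r \<in> carrier R \<Longrightarrow> h i (f r) = g i r"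
    and hx: "\<And>i \<alpha>. i \<in> I \<Longrightarrow> \<alpha> \<in> A \<Longrightarrow> h i (x \<alpha>) = y i \<alpha>"
  shows "adjoins R \<rho> A P Q \<sigma> f x"
  unfolding adjoins_def
proof (intro conjI ballI)
  show "lambda_ring Q \<sigma>" by (rule lambda_ring_Q)
  show "lambda_hom R \<rho> Q \<sigma> f"
    using M by (intro lambda_hom_reflect[OF R f_closed _ hf]) (simp_all add: adjoins_def)
  fix \<alpha> assume \<alpha>: "\<alpha> \<in> A"
  show "x \<alpha> \<in> lambda_sp Q \<sigma>"
    using M \<alpha> by (intro lambda_sp_reflect[OF x_closed[OF \<alpha>]]) (simp add: adjoins_def hx)
  show "ring.eval Q (map f (P \<alpha>)) (x \<alpha>) = \<zero>\<^bsub>Q\<^esub>"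
  proof (rule eval_eq_zero_reflect[OF _ x_closed[OF \<alpha>]])
    show "set (map f (P \<alpha>)) \<subseteq> carrier Q" using P[OF \<alpha>] f_closed by auto
    fix i assume i: "i \<in> I"
    have coeffs: "map (h i) (map f (P \<alpha>)) = map (g i) (P \<alpha>)" using P[OF \<alpha>] i by (auto simp: hf)
    have "ring.eval (M i) (map (g i) (P \<alpha>)) (y i \<alpha>) = \<zero>\<^bsub>M i\<^esub>"
      using M[OF i] \<alpha> by (simp add: adjoins_def)
    then show "ring.eval (M i) (map (h i) (map f (P \<alpha>))) (h i (x \<alpha>)) = \<zero>\<^bsub>M i\<^esub>"
      by (simp only: coeffs hx[OF i \<alpha>])
  qed
qed

end

(* Constants outside R and indeterminates outside A denote 0, so they generate nothing new. *)
primrec lterm_eval :: "'a ring \<Rightarrow> 'b set \<Rightarrow> 'c ring \<Rightarrow> (nat \<Rightarrow> 'c \<Rightarrow> 'c) \<Rightarrow>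
    ('a \<Rightarrow> 'c) \<Rightarrow> ('b \<Rightarrow> 'c) \<Rightarrow> ('a, 'b) lterm \<Rightarrow> 'c" where
  "lterm_eval R A S \<tau> g y (TConst a) = (if a \<in> carrier R then g a else \<zero>\<^bsub>S\<^esub>)"
| "lterm_eval R A S \<tau> g y (TVar \<alpha>) = (if \<alpha> \<in> A then y \<alpha> else \<zero>\<^bsub>S\<^esub>)"
| "lterm_eval R A S \<tau> g y TZero = \<zero>\<^bsub>S\<^esub>"
| "lterm_eval R A S \<tau> g y TOne = \<one>\<^bsub>S\<^esub>"
| "lterm_eval R A S \<tau> g y (TAdd t u) = lterm_eval R A S \<tau> g y t \<oplus>\<^bsub>S\<^esub> lterm_eval R A S \<tau> g y u"
| "lterm_eval R A S \<tau> g y (TNeg t) = \<ominus>\<^bsub>S\<^esub> lterm_eval R A S \<tau> g y t"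
| "lterm_eval R A S \<tau> g y (TMul t u) = lterm_eval R A S \<tau> g y t \<otimes>\<^bsub>S\<^esub> lterm_eval R A S \<tau> g y u"
| "lterm_eval R A S \<tau> g y (TSigma n t) = \<tau> n (lterm_eval R A S \<tau> g y t)"

lemma adjoins_imp_lambda_ring: "adjoins R \<sigma> A P S \<tau> g y \<Longrightarrow> lambda_ring S \<tau>"
  by (simp add: adjoins_def)

lemma lterm_eval_closed:
  assumes "adjoins R \<sigma> A P S \<tau> g y"
  shows "lterm_eval R A S \<tau> g y t \<in> carrier S"
proof -
  from assms have S: "lambda_ring S \<tau>" and g: "g \<in> ring_hom R S" and y: "\<forall>\<alpha>\<in>A. y \<alpha> \<in> carrier S"
    by (auto simp: adjoins_def lambda_hom_def lambda_sp_def)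
  interpret S: cring S using S by (simp add: lambda_ring_def)
  have \<tau>_closed: "a \<in> carrier S \<Longrightarrow> \<tau> n a \<in> carrier S" for n a using S by (simp add: lambda_ring_def)
  show ?thesis
    by (induction t) (simp_all add: ring_hom_closed[OF g] y \<tau>_closed)
qed

definition sub_lambda_ring :: "('c, 'm) ring_scheme \<Rightarrow> (nat \<Rightarrow> 'c \<Rightarrow> 'c) \<Rightarrow> 'c set \<Rightarrow> bool" where
  "sub_lambda_ring S \<tau> H \<longleftrightarrow> H \<subseteq> carrier S \<and> \<zero>\<^bsub>S\<^esub> \<in> H \<and> \<one>\<^bsub>S\<^esub> \<in> H
     \<and> (\<forall>a\<in>H. \<forall>b\<in>H. a \<oplus>\<^bsub>S\<^esub> b \<in> H \<and> a \<otimes>\<^bsub>S\<^esub> b \<in> H)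
     \<and> (\<forall>a\<in>H. \<ominus>\<^bsub>S\<^esub> a \<in> H \<and> (\<forall>n. \<tau> n a \<in> H))"

lemma sub_lambda_ring_range_lterm_eval:
  assumes "adjoins R \<sigma> A P S \<tau> g y"
  shows "sub_lambda_ring S \<tau> (range (lterm_eval R A S \<tau> g y))"
  unfolding sub_lambda_ring_def
proof (intro conjI ballI allI)
  let ?e = "lterm_eval R A S \<tau> g y"
  show "range ?e \<subseteq> carrier S" using lterm_eval_closed[OF assms] by auto
  show "\<zero>\<^bsub>S\<^esub> \<in> range ?e" "\<one>\<^bsub>S\<^esub> \<in> range ?e"
    using rangeI[of ?e TZero] rangeI[of ?e TOne] by simp_all
  fix a b assume "a \<in> range ?e" "b \<in> range ?e"
  then obtain t u where "a = ?e t" "b = ?e u" by auto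
  then show "a \<oplus>\<^bsub>S\<^esub> b \<in> range ?e" "a \<otimes>\<^bsub>S\<^esub> b \<in> range ?e" "\<ominus>\<^bsub>S\<^esub> a \<in> range ?e" "\<tau> n a \<in> range ?e" for n
    using rangeI[of ?e "TAdd t u"] rangeI[of ?e "TMul t u"] rangeI[of ?e "TNeg t"]
      rangeI[of ?e "TSigma n t"] by simp_all
qed

definition transport_ring :: "('c \<Rightarrow> 'd) \<Rightarrow> 'c set \<Rightarrow> 'c ring \<Rightarrow> 'd ring" where
  "transport_ring \<phi> H S = \<lparr>carrier = \<phi> ` H,
     mult = \<lambda>U V. \<phi> (inv_into H \<phi> U \<otimes>\<^bsub>S\<^esub> inv_into H \<phi> V), one = \<phi> \<one>\<^bsub>S\<^esub>,
     zero = \<phi> \<zero>\<^bsub>S\<^esub>, add = \<lambda>U V. \<phi> (inv_into H \<phi> U \<oplus>\<^bsub>S\<^esub> inv_into H \<phi> V)\<rparr>"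

definition transport_sigma :: "('c \<Rightarrow> 'd) \<Rightarrow> 'c set \<Rightarrow> (nat \<Rightarrow> 'c \<Rightarrow> 'c) \<Rightarrow> nat \<Rightarrow> 'd \<Rightarrow> 'd" where
  "transport_sigma \<phi> H \<tau> n U = \<phi> (\<tau> n (inv_into H \<phi> U))"

lemma lambda_subdirect_transport:
  assumes S: "lambda_ring S \<tau>" and H: "sub_lambda_ring S \<tau> H" and inj: "inj_on \<phi> H"
  shows "lambda_subdirect (transport_ring \<phi> H S) (transport_sigma \<phi> H \<tau>)
    (\<lambda>U. \<phi> (\<ominus>\<^bsub>S\<^esub> inv_into H \<phi> U)) (UNIV :: unit set) (\<lambda>_. S) (\<lambda>_. \<tau>) (\<lambda>_. inv_into H \<phi>)"
proof -
  have inv: "inv_into H \<phi> (\<phi> a) = a" if "a \<in> H" for a using inj that by (rule inv_into_f_f)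
  have inv_mem: "inv_into H \<phi> U \<in> H" if "U \<in> \<phi> ` H" for U using that by (rule inv_into_into)
  have img: "\<phi> a \<in> \<phi> ` H" if "a \<in> H" for a using that by (rule imageI)
  have H_carrier: "a \<in> H \<Longrightarrow> a \<in> carrier S" for a using H by (auto simp: sub_lambda_ring_def)
  have H_closed: "\<zero>\<^bsub>S\<^esub> \<in> H" "\<one>\<^bsub>S\<^esub> \<in> H"
    "a \<in> H \<Longrightarrow> b \<in> H \<Longrightarrow> a \<oplus>\<^bsub>S\<^esub> b \<in> H" "a \<in> H \<Longrightarrow> b \<in> H \<Longrightarrow> a \<otimes>\<^bsub>S\<^esub> b \<in> H"
    "a \<in> H \<Longrightarrow> \<ominus>\<^bsub>S\<^esub> a \<in> H" "a \<in> H \<Longrightarrow> \<tau> n a \<in> H" for a b n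
    using H by (simp_all add: sub_lambda_ring_def)
  show ?thesis
  proof unfold_locales
    fix U V assume "U \<in> carrier (transport_ring \<phi> H S)" "V \<in> carrier (transport_ring \<phi> H S)"
      and "\<And>i::unit. i \<in> UNIV \<Longrightarrow> inv_into H \<phi> U = inv_into H \<phi> V"
    then show "U = V" by (auto simp: transport_ring_def inv)
  qed (use S in \<open>simp_all add: transport_ring_def transport_sigma_def
      inv inv_mem img H_carrier H_closed\<close>)
qed

lemma adjoins_transport:
  assumes R: "lambda_ring R \<sigma>" and P: "\<And>\<alpha>. \<alpha> \<in> A \<Longrightarrow> set (P \<alpha>) \<subseteq> carrier R"
    and S: "adjoins R \<sigma> A P S \<tau> g y" and H: "sub_lambda_ring S \<tau> H" and inj: "inj_on \<phi> H"
    and gH: "g ` carrier R \<subseteq> H" and yH: "y ` A \<subseteq> H"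
  shows "adjoins R \<sigma> A P (transport_ring \<phi> H S) (transport_sigma \<phi> H \<tau>) (\<phi> \<circ> g) (\<phi> \<circ> y)"
proof -
  interpret lambda_subdirect "transport_ring \<phi> H S" "transport_sigma \<phi> H \<tau>"
      "\<lambda>U. \<phi> (\<ominus>\<^bsub>S\<^esub> inv_into H \<phi> U)" "UNIV :: unit set" "\<lambda>_. S" "\<lambda>_. \<tau>" "\<lambda>_. inv_into H \<phi>"
    using S H inj by (intro lambda_subdirect_transport) (simp_all add: adjoins_def)
  show ?thesis
    by (rule adjoins_reflect[OF R P S])
       (use gH yH inj in \<open>auto simp: transport_ring_def\<close>)
qed

lemma lterm_eval_transport:
  assumes S: "adjoins R \<sigma> A P S \<tau> g y" and inj: "inj_on \<phi> H"
    and H: "sub_lambda_ring S \<tau> H" and eval_H: "range (lterm_eval R A S \<tau> g y) \<subseteq> H"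
  shows "lterm_eval R A (transport_ring \<phi> H S) (transport_sigma \<phi> H \<tau>) (\<phi> \<circ> g) (\<phi> \<circ> y) t
    = \<phi> (lterm_eval R A S \<tau> g y t)"
proof -
  interpret lambda_subdirect "transport_ring \<phi> H S" "transport_sigma \<phi> H \<tau>"
      "\<lambda>U. \<phi> (\<ominus>\<^bsub>S\<^esub> inv_into H \<phi> U)" "UNIV :: unit set" "\<lambda>_. S" "\<lambda>_. \<tau>" "\<lambda>_. inv_into H \<phi>"
    using S H inj by (intro lambda_subdirect_transport) (simp_all add: adjoins_def)
  have inv: "inv_into H \<phi> (\<phi> (lterm_eval R A S \<tau> g y u)) = lterm_eval R A S \<tau> g y u" for u
    using inj eval_H by (auto intro: inv_into_f_f)
  have mem: "\<phi> (lterm_eval R A S \<tau> g y u) \<in> carrier (transport_ring \<phi> H S)" for u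
    using eval_H by (auto simp: transport_ring_def)
  have neg: "\<ominus>\<^bsub>transport_ring \<phi> H S\<^esub> \<phi> (lterm_eval R A S \<tau> g y u)
      = \<phi> (\<ominus>\<^bsub>S\<^esub> lterm_eval R A S \<tau> g y u)" for u
    using a_inv_eq_neg[OF mem] by (simp add: inv)
  show ?thesis
    by (induction t)
       (simp_all add: neg[unfolded transport_ring_def] transport_ring_def transport_sigma_def inv)
qed

definition lterm_equiv :: "'a ring \<Rightarrow> (nat \<Rightarrow> 'a \<Rightarrow> 'a) \<Rightarrow> 'b set \<Rightarrow> ('b \<Rightarrow> 'a list) \<Rightarrow>
    ('a, 'b) lterm \<Rightarrow> ('a, 'b) lterm \<Rightarrow> bool" where
  "lterm_equiv R \<sigma> A P t u \<longleftrightarrow> (\<forall>(S :: ('a + 'b) list ring) \<tau> g y. adjoins R \<sigma> A P S \<tau> g y \<longrightarrow>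
      lterm_eval R A S \<tau> g y t = lterm_eval R A S \<tau> g y u)"

lemma inj_on_encode_preimage:
  "inj f \<Longrightarrow> inj_on (\<lambda>s. f (SOME t. e t = s)) (range e)"
  by (rule inj_onI) (metis (mono_tags, lifting) injD rangeE someI)

lemma generators_in_range_lterm_eval:
  "g ` carrier R \<subseteq> range (lterm_eval R A S \<tau> g y)" "y ` A \<subseteq> range (lterm_eval R A S \<tau> g y)"
proof (rule_tac [!] image_subsetI)
  show "g r \<in> range (lterm_eval R A S \<tau> g y)" if "r \<in> carrier R" for r
    using that rangeI[of "lterm_eval R A S \<tau> g y" "TConst r"] by simp
  show "y \<alpha> \<in> range (lterm_eval R A S \<tau> g y)" if "\<alpha> \<in> A" for \<alpha>
    using that rangeI[of "lterm_eval R A S \<tau> g y" "TVar \<alpha>"] by simp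
qed

lemma lterm_equiv_imp_eval_eq:
  fixes S :: "'c ring"
  assumes R: "lambda_ring R \<sigma>" and P: "\<And>\<alpha>. \<alpha> \<in> A \<Longrightarrow> set (P \<alpha>) \<subseteq> carrier R"
    and S: "adjoins R \<sigma> A P S \<tau> g y" and equiv: "lterm_equiv R \<sigma> A P t u"
  shows "lterm_eval R A S \<tau> g y t = lterm_eval R A S \<tau> g y u"
proof -
  let ?e = "lterm_eval R A S \<tau> g y"
  define \<phi> :: "'c \<Rightarrow> ('a + 'b) list" where "\<phi> = (\<lambda>s. encode (SOME t. ?e t = s))"
  have inj: "inj_on \<phi> (range ?e)"
    unfolding \<phi>_def by (rule inj_on_encode_preimage[OF inj_encode])
  have H: "sub_lambda_ring S \<tau> (range ?e)" by (rule sub_lambda_ring_range_lterm_eval[OF S])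
  have "adjoins R \<sigma> A P (transport_ring \<phi> (range ?e) S) (transport_sigma \<phi> (range ?e) \<tau>)
      (\<phi> \<circ> g) (\<phi> \<circ> y)"
    using R P S H inj generators_in_range_lterm_eval by (intro adjoins_transport)
  with equiv have "\<phi> (?e t) = \<phi> (?e u)"
    unfolding lterm_equiv_def by (simp flip: lterm_eval_transport[OF S inj H subset_refl])
  with inj show ?thesis by (auto dest: inj_onD)
qed

definition decode :: "('a + 'b) list \<Rightarrow> ('a, 'b) lterm" where
  "decode = inv_into UNIV encode"

lemma decode_encode [simp]: "decode (encode t) = t"
  unfolding decode_def by (rule inv_into_f_f[OF inj_encode UNIV_I])

locale lambda_presentation =
  fixes R :: "'a ring" and \<sigma> :: "nat \<Rightarrow> 'a \<Rightarrow> 'a" and A :: "'b set" and P :: "'b \<Rightarrow> 'a list"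
  assumes lambda_ring_R: "lambda_ring R \<sigma>"
    and coeffs_closed: "\<And>\<alpha>. \<alpha> \<in> A \<Longrightarrow> set (P \<alpha>) \<subseteq> carrier R"
begin

abbreviation equiv_lterm :: "('a, 'b) lterm \<Rightarrow> ('a, 'b) lterm \<Rightarrow> bool" where
  "equiv_lterm \<equiv> lterm_equiv R \<sigma> A P"

definition class_code :: "('a, 'b) lterm \<Rightarrow> ('a + 'b) list" where
  "class_code t = encode (SOME u. equiv_lterm t u)"

lemma equiv_class_rep: "equiv_lterm t (SOME u. equiv_lterm t u)"
  by (rule someI[of _ t]) (simp add: lterm_equiv_def)

lemma class_code_eq_iff: "class_code t = class_code u \<longleftrightarrow> equiv_lterm t u"
proof
  assume "class_code t = class_code u"
  then have "(SOME v. equiv_lterm t v) = (SOME v. equiv_lterm u v)"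
    using inj_encode unfolding class_code_def by (auto dest: injD)
  then show "equiv_lterm t u"
    using equiv_class_rep[of t] equiv_class_rep[of u] by (simp add: lterm_equiv_def)
next
  assume "equiv_lterm t u"
  then have "equiv_lterm t = equiv_lterm u" by (auto simp: lterm_equiv_def fun_eq_iff)
  then show "class_code t = class_code u" by (simp add: class_code_def)
qed

definition free_eval :: "'c ring \<Rightarrow> (nat \<Rightarrow> 'c \<Rightarrow> 'c) \<Rightarrow> ('a \<Rightarrow> 'c) \<Rightarrow> ('b \<Rightarrow> 'c) \<Rightarrow>
    ('a + 'b) list \<Rightarrow> 'c" where
  "free_eval S \<tau> g y U = lterm_eval R A S \<tau> g y (decode U)"

lemma free_eval_class_code:
  assumes "adjoins R \<sigma> A P S \<tau> g y"
  shows "free_eval S \<tau> g y (class_code t) = lterm_eval R A S \<tau> g y t"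
  unfolding free_eval_def class_code_def decode_encode
  using lterm_equiv_imp_eval_eq[OF lambda_ring_R coeffs_closed assms equiv_class_rep] by simp

definition free_ring :: "('a + 'b) list ring" where
  "free_ring = \<lparr>carrier = range class_code,
     mult = \<lambda>U V. class_code (TMul (decode U) (decode V)), one = class_code TOne,
     zero = class_code TZero, add = \<lambda>U V. class_code (TAdd (decode U) (decode V))\<rparr>"

definition free_sigma :: "nat \<Rightarrow> ('a + 'b) list \<Rightarrow> ('a + 'b) list" where
  "free_sigma n U = class_code (TSigma n (decode U))"

definition free_neg :: "('a + 'b) list \<Rightarrow> ('a + 'b) list" where
  "free_neg U = class_code (TNeg (decode U))"

definition free_const :: "'a \<Rightarrow> ('a + 'b) list" where
  "free_const r = class_code (TConst r)"

definition free_var :: "'b \<Rightarrow> ('a + 'b) list" where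
  "free_var \<alpha> = class_code (TVar \<alpha>)"

lemma free_ring_simps:
  "carrier free_ring = range class_code"
  "\<zero>\<^bsub>free_ring\<^esub> = class_code TZero"
  "\<one>\<^bsub>free_ring\<^esub> = class_code TOne"
  "class_code t \<oplus>\<^bsub>free_ring\<^esub> class_code u = class_code (TAdd t u)"
  "class_code t \<otimes>\<^bsub>free_ring\<^esub> class_code u = class_code (TMul t u)"
  "free_neg (class_code t) = class_code (TNeg t)"
  "free_sigma n (class_code t) = class_code (TSigma n t)"
  by (simp_all add: free_ring_def free_neg_def free_sigma_def class_code_eq_iff lterm_equiv_def
      free_eval_class_code[unfolded free_eval_def])

lemma lambda_subdirect_free:
  "lambda_subdirect free_ring free_sigma free_neg
     {(S, \<tau>, g, y). adjoins R \<sigma> A P (S :: ('a + 'b) list ring) \<tau> g y}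
     (\<lambda>(S, _, _, _). S) (\<lambda>(_, \<tau>, _, _). \<tau>) (\<lambda>(S, \<tau>, g, y). free_eval S \<tau> g y)"
proof unfold_locales
  fix U V assume "U \<in> carrier free_ring" "V \<in> carrier free_ring"
  then obtain t u where tu: "U = class_code t" "V = class_code u" by (auto simp: free_ring_simps)
  assume eq: "\<And>i. i \<in> {(S, \<tau>, g, y). adjoins R \<sigma> A P (S :: ('a + 'b) list ring) \<tau> g y} \<Longrightarrow>
      (\<lambda>(S, \<tau>, g, y). free_eval S \<tau> g y) i U = (\<lambda>(S, \<tau>, g, y). free_eval S \<tau> g y) i V"
  have "equiv_lterm t u"
    unfolding lterm_equiv_def
  proof (intro allI impI)
    fix S :: "('a + 'b) list ring" and \<tau> g y assume S: "adjoins R \<sigma> A P S \<tau> g y"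
    with eq[of "(S, \<tau>, g, y)"] show "lterm_eval R A S \<tau> g y t = lterm_eval R A S \<tau> g y u"
      by (simp add: tu free_eval_class_code)
  qed
  with tu show "U = V" by (simp add: class_code_eq_iff)
qed (auto simp: free_ring_simps free_eval_class_code lterm_eval_closed
      intro: adjoins_imp_lambda_ring)

lemma cring_free_ring: "cring free_ring"
  by (rule lambda_subdirect.cring_Q[OF lambda_subdirect_free])

lemma a_inv_free_ring: "\<ominus>\<^bsub>free_ring\<^esub> class_code t = class_code (TNeg t)"
  using lambda_subdirect.a_inv_eq_neg[OF lambda_subdirect_free, of "class_code t"]
  by (simp add: free_ring_simps)

lemma adjoins_free: "adjoins R \<sigma> A P free_ring free_sigma free_const free_var"
  by (rule lambda_subdirect.adjoins_reflect[OF lambda_subdirect_free lambda_ring_R coeffs_closed,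
        where g = "\<lambda>(_, _, g, _). g" and y = "\<lambda>(_, _, _, y). y"])
     (auto simp: free_const_def free_var_def free_ring_simps free_eval_class_code)

lemma lambda_hom_free_eval:
  assumes S: "adjoins R \<sigma> A P S \<tau> g y"
  shows "lambda_hom free_ring free_sigma S \<tau> (free_eval S \<tau> g y)"
  unfolding lambda_hom_def
proof (intro conjI ballI allI)
  interpret S: cring S using S by (simp add: adjoins_def lambda_ring_def)
  show "free_eval S \<tau> g y \<in> ring_hom free_ring S"
    by (rule ring_hom_memI)
       (auto simp: free_ring_simps free_eval_class_code[OF S] lterm_eval_closed[OF S])
  show "free_eval S \<tau> g y (free_sigma n U) = \<tau> n (free_eval S \<tau> g y U)"
    if "U \<in> carrier free_ring" for n U
    using that by (auto simp: free_ring_simps free_eval_class_code[OF S])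
qed

lemma free_eval_unique:
  assumes S: "adjoins R \<sigma> A P S \<tau> g y" and h: "lambda_hom free_ring free_sigma S \<tau> h"
    and h_const: "\<forall>r\<in>carrier R. h (free_const r) = g r"
    and h_var: "\<forall>\<alpha>\<in>A. h (free_var \<alpha>) = y \<alpha>"
    and U: "U \<in> carrier free_ring"
  shows "h U = free_eval S \<tau> g y U"
proof -
  interpret S: cring S using S by (simp add: adjoins_def lambda_ring_def)
  interpret h: ring_hom_cring free_ring S h
    using h by (intro ring_hom_cringI[OF cring_free_ring S.is_cring]) (simp add: lambda_hom_def)
  have code_closed: "class_code t \<in> carrier free_ring" for t by (simp add: free_ring_simps)
  have "h (class_code t) = lterm_eval R A S \<tau> g y t" for t
  proof (induction t)
    case (TConst a)
    have "a \<notin> carrier R \<Longrightarrow> class_code (TConst a) = class_code TZero"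
      by (simp add: class_code_eq_iff lterm_equiv_def)
    with h_const show ?case by (auto simp: free_const_def free_ring_simps[symmetric])
  next
    case (TVar \<alpha>)
    have "\<alpha> \<notin> A \<Longrightarrow> class_code (TVar \<alpha>) = class_code TZero"
      by (simp add: class_code_eq_iff lterm_equiv_def)
    with h_var show ?case by (auto simp: free_var_def free_ring_simps[symmetric])
  next
    case TZero then show ?case by (simp flip: free_ring_simps)
  next
    case TOne then show ?case by (simp flip: free_ring_simps)
  next
    case (TAdd t u) then show ?case
      using h.hom_add[OF code_closed code_closed, of t u] by (simp add: free_ring_simps)
  next
    case (TMul t u) then show ?case
      using h.hom_mult[OF code_closed code_closed, of t u] by (simp add: free_ring_simps)
  next
    case (TNeg t) then show ?case
      using h.hom_a_inv[OF code_closed[of t]] by (simp add: a_inv_free_ring)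
  next
    case (TSigma n t) then show ?case
      using h code_closed[of t] by (simp add: lambda_hom_def free_ring_simps)
  qed
  with U show ?thesis by (auto simp: free_ring_simps free_eval_class_code[OF S])
qed

lemma factors_uniquely_free:
  assumes S: "adjoins R \<sigma> A P S \<tau> g y"
  shows "factors_uniquely R A free_ring free_sigma free_const free_var S \<tau> g y"
  unfolding factors_uniquely_def
proof (intro exI[of _ "free_eval S \<tau> g y"] conjI ballI allI impI)
  show "lambda_hom free_ring free_sigma S \<tau> (free_eval S \<tau> g y)"
    by (rule lambda_hom_free_eval[OF S])
  show "free_eval S \<tau> g y (free_const r) = g r" if "r \<in> carrier R" for r
    using that by (simp add: free_const_def free_eval_class_code[OF S])
  show "free_eval S \<tau> g y (free_var \<alpha>) = y \<alpha>" if "\<alpha> \<in> A" for \<alpha>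
    using that by (simp add: free_var_def free_eval_class_code[OF S])
  show "h z = free_eval S \<tau> g y z"
    if "lambda_hom free_ring free_sigma S \<tau> h \<and> (\<forall>r\<in>carrier R. h (free_const r) = g r)
        \<and> (\<forall>\<alpha>\<in>A. h (free_var \<alpha>) = y \<alpha>)" and "z \<in> carrier free_ring" for h z
    using that by (intro free_eval_unique[OF S]) auto
qed

end

theorem mainTheorem5:
  fixes R :: "'a ring" and \<sigma> :: "nat \<Rightarrow> 'a \<Rightarrow> 'a"
    and A :: "'b set" and P :: "'b \<Rightarrow> 'a list"
  assumes "lambda_ring R \<sigma>"
    and "\<forall>\<alpha>\<in>A. set (P \<alpha>) \<subseteq> lambda_sp R \<sigma>"
  shows "\<exists>(R' :: ('a + 'b) list ring) \<sigma>' f x.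
     adjoins R \<sigma> A P R' \<sigma>' f x
     \<and> (\<forall>(S :: 'c ring) \<tau> g y. adjoins R \<sigma> A P S \<tau> g y \<longrightarrow>
          factors_uniquely R A R' \<sigma>' f x S \<tau> g y)
     \<and> (\<forall>(S :: ('a + 'b) list ring) \<tau> g y. adjoins R \<sigma> A P S \<tau> g y \<longrightarrow>
          factors_uniquely R A R' \<sigma>' f x S \<tau> g y)"
proof -
  interpret lambda_presentation R \<sigma> A P
    using assms by unfold_locales (auto simp: lambda_sp_def)
  have "\<forall>(S :: 'c ring) \<tau> g y. adjoins R \<sigma> A P S \<tau> g y \<longrightarrow>
      factors_uniquely R A free_ring free_sigma free_const free_var S \<tau> g y"
    "\<forall>(S :: ('a + 'b) list ring) \<tau> g y. adjoins R \<sigma> A P S \<tau> g y \<longrightarrow>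
      factors_uniquely R A free_ring free_sigma free_const free_var S \<tau> g y"
    by (blast intro: factors_uniquely_free)+
  with adjoins_free show ?thesis by blast
qed

end
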